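(* Let $n\ge4$, $x_1,\dots,x_{n-1}>0$, $\gamma,\delta>0$ with $\gamma\ne1\ne\delta$, $x_0=1$, and let $\mathbf{P}$ be the $n\times n$ matrix with entries $p_{ij}=x_{j-1}/x_{i-1}$ except $p_{12}=\delta x_1$, $p_{21}=1/(\delta x_1)$, $p_{13}=\gamma x_2$, $p_{31}=1/(\gamma x_2)$. Let $\mathbf{w}^{EM}=(w_1^{EM},\dots,w_n^{EM})^T$ be the principal right eigenvector of $\mathbf{P}$. If $\delta>1$ and $\delta\ge\gamma$, then $w_1^{EM}/w_2^{EM}<\delta x_1$.
   Context: The principal right eigenvector is the positive (Perron) eigenvector belonging to the largest eigenvalue; the ratios of its entries do not depend on its scaling. *)

theory Defs
  imports Complex_Main
begin

text \<open>Indices are 0-based: the paper's row/column i (1..n) is our i-1 (0..n-1).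
  The vector x is given for indices 1..n-1; the convention x_0 = 1 is built in.\<close>

definition xval :: "(nat \<Rightarrow> real) \<Rightarrow> nat \<Rightarrow> real" where
  "xval x k = (if k = 0 then 1 else x k)"

definition pertPCM :: "(nat \<Rightarrow> real) \<Rightarrow> real \<Rightarrow> real \<Rightarrow> nat \<Rightarrow> nat \<Rightarrow> real" where
  "pertPCM x \<gamma> \<delta> i j =
     (if i = 0 \<and> j = 1 then \<delta> * x 1
      else if i = 1 \<and> j = 0 then 1 / (\<delta> * x 1)
      else if i = 0 \<and> j = 2 then \<gamma> * x 2
      else if i = 2 \<and> j = 0 then 1 / (\<gamma> * x 2)
      else xval x j / xval x i)"

definition is_eigenvalue :: "nat \<Rightarrow> (nat \<Rightarrow> nat \<Rightarrow> real) \<Rightarrow> complex \<Rightarrow> bool" where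
  "is_eigenvalue n A \<mu> \<longleftrightarrow>
     (\<exists>v :: nat \<Rightarrow> complex. (\<exists>i<n. v i \<noteq> 0) \<and>
        (\<forall>i<n. (\<Sum>j<n. complex_of_real (A i j) * v j) = \<mu> * v i))"

definition principal_right_eigvec :: "nat \<Rightarrow> (nat \<Rightarrow> nat \<Rightarrow> real) \<Rightarrow> (nat \<Rightarrow> real) \<Rightarrow> bool" where
  "principal_right_eigvec n A w \<longleftrightarrow>
     (\<forall>i<n. w i > 0) \<and>
     (\<exists>r::real. (\<forall>i<n. (\<Sum>j<n. A i j * w j) = r * w i) \<and>
        (\<forall>\<mu>. is_eigenvalue n A \<mu> \<longrightarrow> cmod \<mu> \<le> r))"

end

theory Submission
  imports Defs
begin

text \<open>Let \<open>R = \<Sum>\<^sub>j\<^sub>\<ge>\<^sub>3 x\<^sub>j w\<^sub>j > 0\<close>. Row 0 of \<open>P w = r w\<close> reads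
  \<open>w\<^sub>0 + \<delta>x\<^sub>1w\<^sub>1 + \<gamma>x\<^sub>2w\<^sub>2 + R = r w\<^sub>0\<close>, and row 1 multiplied by \<open>\<delta>x\<^sub>1\<close> reads
  \<open>w\<^sub>0 + \<delta>x\<^sub>1w\<^sub>1 + \<delta>x\<^sub>2w\<^sub>2 + \<delta>R = r \<delta>x\<^sub>1w\<^sub>1\<close>. Subtracting,
  \<open>r (w\<^sub>0 - \<delta>x\<^sub>1w\<^sub>1) = (\<gamma> - \<delta>) x\<^sub>2w\<^sub>2 + (1 - \<delta>) R < 0\<close>, and \<open>r > 0\<close> by row 0.\<close>

lemma sum_lessThan_split3:
  fixes f :: "nat \<Rightarrow> 'a::comm_monoid_add"
  assumes "3 \<le> n"
  shows "(\<Sum>j<n. f j) = f 0 + f 1 + f 2 + (\<Sum>j\<in>{3..<n}. f j)"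
proof -
  have "{..<n} = {..<3} \<union> {3..<n}" using assms by auto
  then have "(\<Sum>j<n. f j) = (\<Sum>j<3. f j) + (\<Sum>j\<in>{3..<n}. f j)"
    by (simp add: sum.union_disjoint ivl_disj_int)
  also have "(\<Sum>j<3. f j) = f 0 + f 1 + f 2"
    by (simp add: numeral_3_eq_3 numeral_2_eq_2 add.assoc)
  finally show ?thesis .
qed

lemma pertPCM_row0:
  assumes "3 \<le> n"
  shows "(\<Sum>j<n. pertPCM x \<gamma> \<delta> 0 j * w j)
           = w 0 + \<delta> * x 1 * w 1 + \<gamma> * x 2 * w 2 + (\<Sum>j\<in>{3..<n}. x j * w j)"
proof -
  have "(\<Sum>j\<in>{3..<n}. pertPCM x \<gamma> \<delta> 0 j * w j) = (\<Sum>j\<in>{3..<n}. x j * w j)"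
    by (rule sum.cong) (auto simp: pertPCM_def xval_def)
  then show ?thesis
    using assms by (simp add: sum_lessThan_split3 pertPCM_def xval_def)
qed

lemma pertPCM_row1_scaled:
  assumes "3 \<le> n" and "x 1 > 0" and "\<delta> > 0"
  shows "\<delta> * x 1 * (\<Sum>j<n. pertPCM x \<gamma> \<delta> 1 j * w j)
           = w 0 + \<delta> * x 1 * w 1 + \<delta> * x 2 * w 2 + \<delta> * (\<Sum>j\<in>{3..<n}. x j * w j)"
proof -
  have "(\<Sum>j\<in>{3..<n}. pertPCM x \<gamma> \<delta> 1 j * w j) = (\<Sum>j\<in>{3..<n}. x j * w j) / x 1"
    unfolding sum_divide_distrib by (rule sum.cong) (auto simp: pertPCM_def xval_def)
  then show ?thesis
    using assms by (simp add: sum_lessThan_split3 pertPCM_def xval_def field_simps)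
qed

theorem mainTheorem5:
  fixes n :: nat and x :: "nat \<Rightarrow> real" and \<gamma> \<delta> :: real and w :: "nat \<Rightarrow> real"
  assumes "n \<ge> 4"
    and "\<forall>k. 1 \<le> k \<and> k \<le> n - 1 \<longrightarrow> x k > 0"
    and "\<gamma> > 0" and "\<delta> > 0" and "\<gamma> \<noteq> 1" and "\<delta> \<noteq> 1"
    and "principal_right_eigvec n (pertPCM x \<gamma> \<delta>) w"
    and "\<delta> > 1" and "\<delta> \<ge> \<gamma>"
  shows "w 0 / w 1 < \<delta> * x 1"
proof -
  have w_pos: "\<And>i. i < n \<Longrightarrow> w i > 0"
    using assms(7) by (auto simp: principal_right_eigvec_def)
  obtain r where eig: "\<And>i. i < n \<Longrightarrow> (\<Sum>j<n. pertPCM x \<gamma> \<delta> i j * w j) = r * w i"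
    using assms(7) by (auto simp: principal_right_eigvec_def)
  have x_pos: "\<And>k. 1 \<le> k \<Longrightarrow> k < n \<Longrightarrow> x k > 0"
    using assms(1,2) by auto
  define R where "R = (\<Sum>j\<in>{3..<n}. x j * w j)"
  have "R > 0"
    unfolding R_def using assms(1)
    by (intro sum_pos2[of _ 3]) (auto intro!: mult_pos_pos less_imp_le x_pos w_pos)
  have row0: "w 0 + \<delta> * x 1 * w 1 + \<gamma> * x 2 * w 2 + R = r * w 0"
    using eig[of 0] pertPCM_row0[of n] assms(1) by (simp add: R_def)
  have row1: "w 0 + \<delta> * x 1 * w 1 + \<delta> * x 2 * w 2 + \<delta> * R = r * (\<delta> * x 1 * w 1)"
    using pertPCM_row1_scaled[of n x \<delta> \<gamma> w] eig[of 1] assms(1,4) x_pos[of 1]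
    by (simp add: R_def mult.commute mult.left_commute)
  have pos: "w 0 > 0" "w 1 > 0" "w 2 > 0" "x 1 > 0" "x 2 > 0"
    using assms(1) by (auto intro: w_pos x_pos)
  have "r * w 0 > 0"
    unfolding row0[symmetric] using pos assms(3,4) \<open>R > 0\<close> by (simp add: add_pos_pos)
  then have "r > 0"
    using pos by (simp add: zero_less_mult_iff)
  have "r * (w 0 - \<delta> * x 1 * w 1) = (\<gamma> - \<delta>) * (x 2 * w 2) + (1 - \<delta>) * R"
    using row0 row1 by (simp add: algebra_simps)
  also have "\<dots> < 0"
  proof -
    have "(\<gamma> - \<delta>) * (x 2 * w 2) \<le> 0"
      using assms(9) pos by (simp add: mult_nonpos_nonneg)
    moreover have "(1 - \<delta>) * R < 0"
      using assms(8) \<open>R > 0\<close> by (simp add: mult_neg_pos)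
    ultimately show ?thesis by linarith
  qed
  finally have "w 0 < \<delta> * x 1 * w 1"
    using \<open>r > 0\<close> by (simp add: mult_less_0_iff)
  then show ?thesis
    using pos by (simp add: divide_less_eq)
qed

end
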